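(* Let $K$ be a virtual knot and $r\geq2$ an integer. For every $i$ with $1\leq i\leq r$, the $i$th component $K_i$ of the $r$-multiplexed virtual link $L(K;r)$, considered as a virtual knot, is equivalent to the $r$th covering $K^{(r)}$ of $K$. In particular, $K_1,\dots,K_r$ are all the same virtual knot.
   Context: Virtual link diagrams have real (positive/negative) and virtual crossings; virtual links/knots are equivalence classes under generalized Reidemeister moves. $r$-multiplexing: for a virtual knot diagram $D$ and $r\geq2$, $L(D;r)$ is obtained by replacing $D$ with a bundle of $r$ parallel strands, positions numbered $1,\dots,r$ left to right w.r.t. the orientation. At each positive (resp. negative) crossing of $D$ the two bundles cross in an $r\times r$ grid where the position-$p$ strand of the over-bundle crosses the position-$p$ strand of the under-bundle at a positive (resp. negative) real crossing with the over-bundle strand on top, all other grid crossings being virtual. At each virtual crossing of $D$ the bundles cross in an $r\times r$ grid of virtual crossings, and each bundle additionally has its strands cyclically shifted via $r-1$ virtual crossings: position $p$ goes to $p-1\pmod r$ if the other string of $D$ crosses the bundle from left to right, and to $p+1\pmod r$ if from right to left. The result has $r$ components; with a base point on $D$, the $i$th is the one through position $i$ there. $L(K;r)$ denotes the virtual link represented by $L(D;r)$ for any diagram $D$ of $K$ (well defined). Index: for a real crossing $c$ of $D$, its specified path runs along $D$ from the overcrossing to the undercrossing at $c$; each real crossing on it contributes $+1$ if the other string crosses the path from left to right and $-1$ otherwise; $\mathrm{ind}(c)$ is the sum. The $r$th covering: $D^{(r)}$ is obtained from $D$ by replacing every real crossing whose index is not divisible by $r$ with a virtual crossing; its virtual knot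 type is an invariant of $K$, denoted $K^{(r)}$. *)

theory Defs
  imports Main "HOL-Library.Countable" "HOL-Library.Multiset"
begin

text \<open>A Gauss diagram of a (long-cut) virtual knot: the cyclic word read along the
  knot from a base point.  A letter (c, ov, s) records a passage through the real
  crossing c, which is the over-passage iff ov, and the sign s of c.\<close>

type_synonym 'a gletter = "'a \<times> bool \<times> int"

definition gd_wf :: "'a gletter list \<Rightarrow> bool" where
  "gd_wf w \<longleftrightarrow> (\<forall>c \<in> fst ` set w. \<exists>s. (s = 1 \<or> s = -1)
      \<and> length (filter (\<lambda>x. fst x = c) w) = 2
      \<and> (c, True, s) \<in> set w \<and> (c, False, s) \<in> set w)"

definition pm :: "bool \<Rightarrow> int" where
  "pm b = (if b then 1 else -1)"

text \<open>Admissible Reidemeister-III triangle: T is the top strand (over at a and b),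
  M the middle strand (under at a, over at c), B the bottom strand (under at b and c).
  The boolean flags record the order of the two passages on each strand; the sign
  condition is exactly the one realised by three straight oriented lines forming a
  triangle in the plane.\<close>

definition r3_triangle ::
  "'a gletter list \<Rightarrow> 'a gletter list \<Rightarrow> 'a gletter list \<Rightarrow> bool" where
  "r3_triangle T M B \<longleftrightarrow> (\<exists>a b c sa sb sc ta mu be.
      distinct [a, b, c] \<and>
      T = (if ta then [(a, True, sa), (b, True, sb)] else [(b, True, sb), (a, True, sa)]) \<and>
      M = (if mu then [(a, False, sa), (c, True, sc)] else [(c, True, sc), (a, False, sa)]) \<and>
      B = (if be then [(b, False, sb), (c, False, sc)] else [(c, False, sc), (b, False, sb)]) \<and>
      sa * pm ta * pm mu = sb * pm ta * pm be \<and>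
      sb * pm ta * pm be = sc * pm mu * pm be)"

inductive gd_step :: "nat gletter list \<Rightarrow> nat gletter list \<Rightarrow> bool" where
  rot: "gd_wf (u @ v) \<Longrightarrow> gd_step (u @ v) (v @ u)"
| rename: "gd_wf w \<Longrightarrow> inj f \<Longrightarrow> gd_step w (map (\<lambda>(c, ov, s). (f c, ov, s)) w)"
| r1: "gd_wf (u @ v) \<Longrightarrow> gd_wf (u @ [(c, ov, s), (c, \<not> ov, s)] @ v) \<Longrightarrow>
       gd_step (u @ v) (u @ [(c, ov, s), (c, \<not> ov, s)] @ v)"
| r2: "gd_wf (u @ v @ z) \<Longrightarrow> gd_wf (u @ [(a, ov, s), (b, ov, - s)] @ v @ P @ z) \<Longrightarrow>
       P = [(a, \<not> ov, s), (b, \<not> ov, - s)] \<or> P = [(b, \<not> ov, - s), (a, \<not> ov, s)] \<Longrightarrow>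
       gd_step (u @ v @ z) (u @ [(a, ov, s), (b, ov, - s)] @ v @ P @ z)"
| r3: "gd_wf (u0 @ P1 @ u1 @ P2 @ u2 @ P3 @ u3) \<Longrightarrow>
       mset [P1, P2, P3] = mset [T, M, B] \<Longrightarrow> r3_triangle T M B \<Longrightarrow>
       gd_step (u0 @ P1 @ u1 @ P2 @ u2 @ P3 @ u3)
               (u0 @ rev P1 @ u1 @ rev P2 @ u2 @ rev P3 @ u3)"

definition gd_relabel :: "'a::countable gletter list \<Rightarrow> nat gletter list" where
  "gd_relabel w = map (\<lambda>(c, ov, s). (to_nat c, ov, s)) w"

definition gd_equiv :: "'a::countable gletter list \<Rightarrow> 'b::countable gletter list \<Rightarrow> bool" where
  "gd_equiv w1 w2 \<longleftrightarrow> (\<lambda>x y. gd_step x y \<or> gd_step y x)\<^sup>*\<^sup>* (gd_relabel w1) (gd_relabel w2)"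

datatype ptype = Over | Under | Virt

text \<open>A passage (c, k, lr): the diagram passes through crossing c; k says whether it is
  the over- or under-passage of a real crossing, or a passage of a virtual crossing;
  lr says that the other string crosses this passage from left to right.
  The list enumerates the passages in order along the oriented knot from the base point.\<close>

type_synonym vpassage = "nat \<times> ptype \<times> bool"

definition kind :: "vpassage list \<Rightarrow> nat \<Rightarrow> ptype" where
  "kind w t = fst (snd (w ! t))"

definition lr :: "vpassage list \<Rightarrow> nat \<Rightarrow> bool" where
  "lr w t = snd (snd (w ! t))"

definition partner :: "vpassage list \<Rightarrow> nat \<Rightarrow> nat" where
  "partner w p = (THE q. q < length w \<and> q \<noteq> p \<and> fst (w ! q) = fst (w ! p))"

definition vd_local_wf :: "vpassage list \<Rightarrow> bool" where
  "vd_local_wf w \<longleftrightarrow>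
     (\<forall>p < length w. \<exists>!q. q < length w \<and> q \<noteq> p \<and> fst (w ! q) = fst (w ! p)) \<and>
     (\<forall>p < length w. lr w (partner w p) \<noteq> lr w p \<and>
        (kind w p = Virt \<longleftrightarrow> kind w (partner w p) = Virt) \<and>
        (kind w p = Over \<longleftrightarrow> kind w (partner w p) = Under))"

text \<open>Rotation system of the underlying 4-valent graph.  Edge e runs from passage e to
  passage e+1 (mod N).  Dart (e, True) is its tail (outgoing at passage e), dart
  (e, False) its head (incoming at passage e+1).\<close>

definition dart_out :: "nat \<Rightarrow> nat \<times> bool" where
  "dart_out p = (p, True)"

definition dart_in :: "vpassage list \<Rightarrow> nat \<Rightarrow> nat \<times> bool" where
  "dart_in w p = ((p + length w - 1) mod length w, False)"

definition dart_alpha :: "nat \<times> bool \<Rightarrow> nat \<times> bool" where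
  "dart_alpha d = (fst d, \<not> snd d)"

text \<open>Counterclockwise successor of a dart around its vertex: if at passage p the other
  strand (passage q) crosses from left to right, the ccw cyclic order is
  out_p, in_q, in_p, out_q.\<close>
definition dart_sigma :: "vpassage list \<Rightarrow> nat \<times> bool \<Rightarrow> nat \<times> bool" where
  "dart_sigma w d =
     (let p = (if snd d then fst d else (fst d + 1) mod length w); q = partner w p in
      if snd d then (if lr w p then dart_in w q else dart_out q)
      else (if lr w p then dart_out q else dart_in w q))"

definition face_perm :: "vpassage list \<Rightarrow> nat \<times> bool \<Rightarrow> nat \<times> bool" where
  "face_perm w d = dart_sigma w (dart_alpha d)"

definition darts :: "vpassage list \<Rightarrow> (nat \<times> bool) set" where
  "darts w = {..<length w} \<times> UNIV"

definition num_faces :: "vpassage list \<Rightarrow> nat" where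
  "num_faces w = card (darts w // {(x, y). x \<in> darts w \<and> y \<in> darts w \<and>
                                     (\<exists>k. (face_perm w ^^ k) x = y)})"

text \<open>A virtual knot diagram: locally well-formed and the underlying immersed curve is
  planar (the rotation system has genus 0: V - E + F = 2 with V = N/2, E = N).\<close>
definition vd_wf :: "vpassage list \<Rightarrow> bool" where
  "vd_wf w \<longleftrightarrow> vd_local_wf w \<and> (w \<noteq> [] \<longrightarrow> num_faces w = length w div 2 + 2)"

text \<open>Sign of the real crossing through passage t (positive = right-handed).\<close>
definition psign :: "vpassage list \<Rightarrow> nat \<Rightarrow> int" where
  "psign w t = (if (kind w t = Over) = lr w t then -1 else 1)"

definition vd_gauss :: "vpassage list \<Rightarrow> nat gletter list" where
  "vd_gauss w = concat (map (\<lambda>t. if kind w t = Virt then []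
                 else [(fst (w ! t), kind w t = Over, psign w t)]) [0..<length w])"

definition on_path :: "nat \<Rightarrow> nat \<Rightarrow> nat \<Rightarrow> nat \<Rightarrow> bool" where
  "on_path N a b t = (if a < b then a < t \<and> t < b else (a < t \<and> t < N) \<or> t < b)"

definition vd_index :: "vpassage list \<Rightarrow> nat \<Rightarrow> int" where
  "vd_index w t =
     (let a = (if kind w t = Over then t else partner w t);
          b = (if kind w t = Over then partner w t else t) in
      \<Sum>u \<in> {u. u < length w \<and> on_path (length w) a b u \<and> kind w u \<noteq> Virt}. pm (lr w u))"

text \<open>D^(r): real crossings of index not divisible by r become virtual.\<close>
definition covering :: "vpassage list \<Rightarrow> nat \<Rightarrow> nat gletter list" where
  "covering w r = concat (map (\<lambda>t.
      if kind w t \<noteq> Virt \<and> int r dvd vd_index w t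
      then [(fst (w ! t), kind w t = Over, psign w t)] else []) [0..<length w])"

text \<open>Shift of the bundle positions at a passage: at a virtual crossing the position p
  goes to p - 1 (mod r) if the other string crosses from left to right, p + 1 otherwise.\<close>
definition vshift :: "vpassage list \<Rightarrow> nat \<Rightarrow> int" where
  "vshift w t = (if kind w t = Virt then (if lr w t then -1 else 1) else 0)"

definition pre_shift :: "vpassage list \<Rightarrow> nat \<Rightarrow> int" where
  "pre_shift w t = (\<Sum>u < t. vshift w u)"

definition lap_shift :: "vpassage list \<Rightarrow> int" where
  "lap_shift w = pre_shift w (length w)"

definition nlaps :: "vpassage list \<Rightarrow> nat \<Rightarrow> nat" where
  "nlaps w r = (LEAST m::nat. m > 0 \<and> (int m * lap_shift w) mod int r = 0)"

text \<open>Gauss word (real crossings only) of the component of L(D;r) through position i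
  (positions taken mod r) at the base point.  The real crossing of L(D;r) in the grid
  of crossing c where the position-p strands meet is labelled (c, p mod r).\<close>
definition mplex_component :: "vpassage list \<Rightarrow> nat \<Rightarrow> nat \<Rightarrow> (nat \<times> int) gletter list" where
  "mplex_component w r i = concat (map (\<lambda>l. concat (map (\<lambda>t.
       if kind w t = Virt then []
       else [((fst (w ! t), (int i + int l * lap_shift w + pre_shift w t) mod int r),
              kind w t = Over, psign w t)]) [0..<length w])) [0..<nlaps w r])"

text \<open>The i-th component considered as a virtual knot: crossings with other components
  are forgotten (become virtual), i.e. only self-crossings are kept.\<close>
definition mplex_knot :: "vpassage list \<Rightarrow> nat \<Rightarrow> nat \<Rightarrow> (nat \<times> int) gletter list" where
  "mplex_knot w r i = (let C = mplex_component w r i in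
      filter (\<lambda>x. length (filter (\<lambda>y. fst y = fst x) C) = 2) C)"

end

theory Submission
  imports Defs Complex_Main "HOL-Library.Function_Algebras"
begin

text \<open>The bundle shifts at the two passages of a virtual crossing cancel, so every component
  of L(D;r) runs exactly once along D, its strand at passage t sitting at position
  i + (sum of the shifts before t) mod r.  At a real crossing c of D the component meets
  itself iff r divides the difference of these accumulated shifts at the two passages of c.
  On a planar diagram this difference is the index of c up to sign: the loop of D from one
  passage of c to the other has zero algebraic intersection number with D, so its real
  and virtual crossings contribute opposite amounts.  This Jordan curve property comes
  from Euler's formula, which makes the face boundaries span the cycle space of the
  underlying 4-valent graph, together with the fact that the intersection number vanishes
  on face boundaries.  Hence the component with its other crossings forgotten is the Gauss
  diagram of D^(r) with injectively renamed crossings.\<close>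

lemma vd_wf_imp_local_wf: "vd_wf w \<Longrightarrow> vd_local_wf w"
  unfolding vd_wf_def by simp

lemma partner_spec:
  assumes "vd_local_wf w" and "p < length w"
  shows "partner w p < length w \<and> partner w p \<noteq> p \<and> fst (w ! partner w p) = fst (w ! p)"
  unfolding partner_def by (rule theI') (use assms in \<open>auto simp: vd_local_wf_def\<close>)

lemma partner_less_length: "vd_local_wf w \<Longrightarrow> p < length w \<Longrightarrow> partner w p < length w"
  using partner_spec by blast

lemma partner_neq: "vd_local_wf w \<Longrightarrow> p < length w \<Longrightarrow> partner w p \<noteq> p"
  using partner_spec by blast

lemma fst_nth_partner: "vd_local_wf w \<Longrightarrow> p < length w \<Longrightarrow> fst (w ! partner w p) = fst (w ! p)"
  using partner_spec by blast

lemma partner_eqI: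
  assumes "vd_local_wf w" "p < length w" "q < length w" "q \<noteq> p" "fst (w ! q) = fst (w ! p)"
  shows "q = partner w p"
  using assms partner_spec[OF assms(1,2)] unfolding vd_local_wf_def by blast

lemma partner_partner: "vd_local_wf w \<Longrightarrow> p < length w \<Longrightarrow> partner w (partner w p) = p"
  using partner_eqI[of w "partner w p" p] partner_spec[of w p] by auto

lemma lr_partner: "vd_local_wf w \<Longrightarrow> p < length w \<Longrightarrow> lr w (partner w p) = (\<not> lr w p)"
  unfolding vd_local_wf_def by auto

lemma kind_partner_Virt_iff:
  "vd_local_wf w \<Longrightarrow> p < length w \<Longrightarrow> kind w (partner w p) = Virt \<longleftrightarrow> kind w p = Virt"
  unfolding vd_local_wf_def by auto

lemma kind_partner_Under_iff:
  "vd_local_wf w \<Longrightarrow> p < length w \<Longrightarrow> kind w (partner w p) = Under \<longleftrightarrow> kind w p = Over"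
  unfolding vd_local_wf_def by auto

lemma kind_partner_Over_iff:
  "vd_local_wf w \<Longrightarrow> p < length w \<Longrightarrow> kind w (partner w p) = Over \<longleftrightarrow> kind w p = Under"
  using kind_partner_Under_iff[of w "partner w p"] partner_partner partner_less_length by auto

lemma bij_betw_partner: "vd_local_wf w \<Longrightarrow> bij_betw (partner w) {..<length w} {..<length w}"
  by (rule bij_betw_byWitness[where f'="partner w"]) (auto simp: partner_partner partner_less_length)

lemma sum_eq_0_if_bij_betw_neg:
  fixes f :: "'a \<Rightarrow> 'b::linordered_ab_group_add"
  assumes "bij_betw g A A" and "\<And>x. x \<in> A \<Longrightarrow> f (g x) = - f x"
  shows "sum f A = 0"
proof -
  have "sum f A = sum (f \<circ> g) A"
    using sum.reindex_bij_betw[OF assms(1), of f] by simp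
  also have "\<dots> = - sum f A"
    using assms(2) by (simp add: sum_negf)
  finally show ?thesis by simp
qed

lemma sum_pm_lr_eq_0: "vd_local_wf w \<Longrightarrow> (\<Sum>u<length w. pm (lr w u)) = 0"
  by (rule sum_eq_0_if_bij_betw_neg[OF bij_betw_partner]) (auto simp: lr_partner pm_def)

lemma lap_shift_eq_0: "vd_local_wf w \<Longrightarrow> lap_shift w = 0"
  unfolding lap_shift_def pre_shift_def
  by (rule sum_eq_0_if_bij_betw_neg[OF bij_betw_partner])
     (auto simp: lr_partner kind_partner_Virt_iff vshift_def)

section \<open>The rotation system and its faces\<close>

definition pred_mod :: "nat \<Rightarrow> nat \<Rightarrow> nat" where
  "pred_mod N p = (p + N - 1) mod N"

lemma dart_in_eq: "dart_in w p = (pred_mod (length w) p, False)"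
  by (simp add: dart_in_def pred_mod_def)

lemma Suc_pred_mod: "p < N \<Longrightarrow> Suc (pred_mod N p) mod N = p"
  unfolding pred_mod_def by (cases p) (auto simp: mod_Suc Suc_diff_Suc)

lemma pred_mod_Suc: "e < N \<Longrightarrow> pred_mod N (Suc e mod N) = e"
  unfolding pred_mod_def by (cases "Suc e = N") (auto simp: mod_Suc)

lemma pred_mod_less: "0 < N \<Longrightarrow> pred_mod N p < N"
  unfolding pred_mod_def by simp

lemma pred_mod_eq_diff: "0 < p \<Longrightarrow> p < N \<Longrightarrow> pred_mod N p = p - 1"
proof -
  assume "0 < p" "p < N"
  then have "(p + N - 1) mod N = (p - 1 + N) mod N" by simp
  with \<open>p < N\<close> show ?thesis unfolding pred_mod_def by simp
qed

lemma pred_mod_0: "0 < N \<Longrightarrow> pred_mod N 0 = N - 1"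
  unfolding pred_mod_def by simp

lemma bij_betw_pred_mod: "0 < N \<Longrightarrow> bij_betw (pred_mod N) {..<N} {..<N}"
  by (rule bij_betw_byWitness[where f'="\<lambda>e. Suc e mod N"])
     (auto simp: Suc_pred_mod pred_mod_Suc pred_mod_less)

lemma dart_sigma_out:
  "p < length w \<Longrightarrow> dart_sigma w (p, True) =
     (if lr w p then dart_in w (partner w p) else dart_out (partner w p))"
  by (simp add: dart_sigma_def Let_def)

lemma dart_sigma_in:
  "p < length w \<Longrightarrow> dart_sigma w (dart_in w p) =
     (if lr w p then dart_out (partner w p) else dart_in w (partner w p))"
  by (simp add: dart_sigma_def Let_def dart_in_eq Suc_pred_mod)

lemma dart_sigma_dart_sigma_in:
  assumes "vd_local_wf w" and "p < length w"
  shows "dart_sigma w (dart_sigma w (dart_in w p)) = (p, True)"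
  using assms partner_less_length partner_partner lr_partner
  by (cases "lr w p") (auto simp: dart_sigma_in dart_sigma_out dart_out_def)

lemma head_dart_eq: "e < length w \<Longrightarrow> (e, False) = dart_in w (Suc e mod length w)"
  by (simp add: dart_in_eq pred_mod_Suc)

lemma dart_sigma_in_darts:
  assumes wf: "vd_local_wf w" and d: "d \<in> darts w"
  shows "dart_sigma w d \<in> darts w"
proof -
  obtain e b where eb: "d = (e, b)" "e < length w"
    using d by (auto simp: darts_def)
  then have N: "0 < length w" by linarith
  then have "Suc e mod length w < length w" by simp
  then show ?thesis
    using eb partner_less_length[OF wf] pred_mod_less[OF N]
    by (cases b) (auto simp: dart_sigma_def Let_def darts_def dart_in_eq dart_out_def)
qed

lemma dart_alpha_in_darts: "d \<in> darts w \<Longrightarrow> dart_alpha d \<in> darts w"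
  by (auto simp: darts_def dart_alpha_def)

lemma face_perm_in_darts: "vd_local_wf w \<Longrightarrow> d \<in> darts w \<Longrightarrow> face_perm w d \<in> darts w"
  unfolding face_perm_def by (intro dart_sigma_in_darts dart_alpha_in_darts)

lemma dart_sigma_4:
  assumes wf: "vd_local_wf w" and d: "d \<in> darts w"
  shows "dart_sigma w (dart_sigma w (dart_sigma w (dart_sigma w d))) = d"
proof -
  obtain e b where eb: "d = (e, b)" "e < length w"
    using d by (auto simp: darts_def)
  have "dart_sigma w (dart_sigma w (p, True)) = dart_in w p" if "p < length w" for p
    using that wf partner_less_length partner_partner lr_partner
    by (cases "lr w p") (auto simp: dart_sigma_in dart_sigma_out dart_out_def)
  moreover have "Suc e mod length w < length w"
    using eb by (intro mod_less_divisor) linarith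
  ultimately show ?thesis
    using eb head_dart_eq[OF eb(2)] dart_sigma_dart_sigma_in[OF wf] by (cases b) auto
qed

lemma inj_on_face_perm:
  assumes wf: "vd_local_wf w"
  shows "inj_on (face_perm w) (darts w)"
proof
  fix x y
  assume "x \<in> darts w" "y \<in> darts w" "face_perm w x = face_perm w y"
  then have "dart_alpha x = dart_alpha y"
    unfolding face_perm_def by (metis dart_sigma_4[OF wf] dart_alpha_in_darts)
  then show "x = y"
    by (auto simp: dart_alpha_def prod_eq_iff)
qed

lemma funpow_in_if_image_subset: "f ` A \<subseteq> A \<Longrightarrow> x \<in> A \<Longrightarrow> (f ^^ k) x \<in> A"
  by (induction k) auto

lemma funpow_returns_if_inj_on:
  assumes inj: "inj_on f A" and endo: "f ` A \<subseteq> A" and "finite A" and x: "x \<in> A"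
  obtains n where "n > 0" and "(f ^^ n) x = x"
proof -
  have "\<not> inj_on (\<lambda>k. (f ^^ k) x) {0..card A}"
  proof
    assume "inj_on (\<lambda>k. (f ^^ k) x) {0..card A}"
    moreover have "(\<lambda>k. (f ^^ k) x) ` {0..card A} \<subseteq> A"
      using funpow_in_if_image_subset[OF endo x] by auto
    ultimately have "card {0..card A} \<le> card A"
      using card_inj_on_le \<open>finite A\<close> by blast
    then show False by simp
  qed
  then obtain a b where ab: "a < b" "(f ^^ a) x = (f ^^ b) x"
    unfolding inj_on_def by (metis linorder_neqE_nat)
  have cancel: "(f ^^ k) y = (f ^^ k) z \<Longrightarrow> y = z" if "y \<in> A" "z \<in> A" for k y z
    using that by (induction k) (auto dest: inj_onD[OF inj] simp: funpow_in_if_image_subset[OF endo])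
  have "(f ^^ a) ((f ^^ (b - a)) x) = (f ^^ a) x"
    using ab funpow_add[of a "b - a" f] by simp
  then have "(f ^^ (b - a)) x = x"
    using cancel funpow_in_if_image_subset[OF endo x] x by blast
  with ab show ?thesis
    using that[of "b - a"] by simp
qed

definition face_rel :: "vpassage list \<Rightarrow> ((nat \<times> bool) \<times> (nat \<times> bool)) set" where
  "face_rel w = {(x, y). x \<in> darts w \<and> y \<in> darts w \<and> (\<exists>k. (face_perm w ^^ k) x = y)}"

definition faces :: "vpassage list \<Rightarrow> (nat \<times> bool) set set" where
  "faces w = darts w // face_rel w"

lemma num_faces_eq_card_faces: "num_faces w = card (faces w)"
  unfolding num_faces_def faces_def face_rel_def ..

lemma finite_darts: "finite (darts w)"
  unfolding darts_def by simp

lemma finite_faces: "finite (faces w)"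
  unfolding faces_def by (rule finite_quotient[OF finite_darts]) (auto simp: face_rel_def)

lemma face_rel_face_perm: "vd_local_wf w \<Longrightarrow> d \<in> darts w \<Longrightarrow> (d, face_perm w d) \<in> face_rel w"
  unfolding face_rel_def using face_perm_in_darts by (auto intro!: exI[of _ 1])

lemma equiv_face_rel:
  assumes wf: "vd_local_wf w"
  shows "equiv (darts w) (face_rel w)"
proof (rule equivI)
  show "refl_on (darts w) (face_rel w)"
    by (rule refl_onI) (auto simp: face_rel_def intro!: exI[of _ 0])
  show "sym (face_rel w)"
  proof (rule symI)
    fix x y
    assume "(x, y) \<in> face_rel w"
    then obtain k where k: "x \<in> darts w" "y \<in> darts w" "(face_perm w ^^ k) x = y"
      unfolding face_rel_def by blast
    obtain n where n: "n > 0" "(face_perm w ^^ n) x = x"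
      using funpow_returns_if_inj_on[OF inj_on_face_perm[OF wf] _ finite_darts k(1)]
        face_perm_in_darts[OF wf] by blast
    have "(face_perm w ^^ (n * k)) x = x"
      by (induction k) (simp_all add: funpow_add n(2) del: funpow.simps)
    moreover have "n * k - k + k = n * k"
      using n(1) by (cases n) auto
    ultimately have "(face_perm w ^^ (n * k - k)) y = x"
      using k(3) funpow_add[of "n * k - k" k "face_perm w"] by simp
    with k show "(y, x) \<in> face_rel w"
      unfolding face_rel_def by blast
  qed
  show "trans (face_rel w)"
  proof (rule transI)
    fix x y z
    assume "(x, y) \<in> face_rel w" "(y, z) \<in> face_rel w"
    then obtain k1 k2 where "x \<in> darts w" "z \<in> darts w" "(face_perm w ^^ k1) x = y"
        "(face_perm w ^^ k2) y = z"
      unfolding face_rel_def by blast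
    then show "(x, z) \<in> face_rel w"
      unfolding face_rel_def using funpow_add[of k2 k1 "face_perm w"]
      by (auto intro!: exI[of _ "k2 + k1"])
  qed
qed (auto simp: face_rel_def)

lemma face_perm_mem_face_iff:
  assumes wf: "vd_local_wf w" and C: "C \<in> faces w" and d: "d \<in> darts w"
  shows "face_perm w d \<in> C \<longleftrightarrow> d \<in> C"
  using face_rel_face_perm[OF wf d] equiv_face_rel[OF wf] C
    in_quotient_imp_closed sym_def[of "face_rel w"]
  unfolding faces_def equiv_def by metis

lemma dart_sigma_mem_face_iff:
  assumes wf: "vd_local_wf w" and C: "C \<in> faces w" and d: "d \<in> darts w"
  shows "dart_sigma w d \<in> C \<longleftrightarrow> dart_alpha d \<in> C"
  using face_perm_mem_face_iff[OF wf C dart_alpha_in_darts[OF d]]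
  by (simp add: face_perm_def dart_alpha_def)

lemma tail_pred_mem_face_iff:
  assumes wf: "vd_local_wf w" and C: "C \<in> faces w" and p: "p < length w"
  shows "(pred_mod (length w) p, True) \<in> C
    \<longleftrightarrow> (if lr w p then (partner w p, True) else dart_in w (partner w p)) \<in> C"
proof -
  have "dart_in w p \<in> darts w"
    using pred_mod_less[OF le_less_trans[OF le0 p]] by (simp add: darts_def dart_in_eq)
  from dart_sigma_mem_face_iff[OF wf C this] show ?thesis
    unfolding dart_sigma_in[OF p] dart_out_def
    by (cases "lr w p") (simp_all add: dart_alpha_def dart_in_eq)
qed

lemma head_mem_face_iff:
  assumes wf: "vd_local_wf w" and C: "C \<in> faces w" and p: "p < length w"
  shows "(p, False) \<in> C \<longleftrightarrow> (if lr w p then dart_in w (partner w p) else (partner w p, True)) \<in> C"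
proof -
  have "(p, True) \<in> darts w"
    using p by (simp add: darts_def)
  from dart_sigma_mem_face_iff[OF wf C this] show ?thesis
    unfolding dart_sigma_out[OF p] dart_out_def
    by (cases "lr w p") (simp_all add: dart_alpha_def)
qed

section \<open>Face boundaries span the cycle space\<close>

definition fscale :: "real \<Rightarrow> (nat \<Rightarrow> real) \<Rightarrow> nat \<Rightarrow> real" where
  "fscale a f = (\<lambda>x. a * f x)"

interpretation edge_fun: vector_space fscale
  by unfold_locales (auto simp: fscale_def fun_eq_iff algebra_simps)

lemma sum_fun_apply: "(sum g A) e = (\<Sum>a\<in>A. g a e)"
  for g :: "'a \<Rightarrow> 'b \<Rightarrow> 'c::comm_monoid_add"
  by (induction A rule: infinite_finite_induct) auto

text \<open>Edge chains are real functions on the edges 0, ..., N - 1 (edge e runs from passage e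
  to passage e + 1 mod N).  A cycle satisfies Kirchhoff's law at the vertex formed by a
  passage p and its partner q: the edges ending at p and q carry as much as those starting
  there.\<close>

definition is_cycle :: "vpassage list \<Rightarrow> (nat \<Rightarrow> real) \<Rightarrow> bool" where
  "is_cycle w x \<longleftrightarrow> (\<forall>e. length w \<le> e \<longrightarrow> x e = 0) \<and>
     (\<forall>p < length w. x (pred_mod (length w) p) + x (pred_mod (length w) (partner w p))
                     = x p + x (partner w p))"

definition face_boundary :: "vpassage list \<Rightarrow> (nat \<times> bool) set \<Rightarrow> nat \<Rightarrow> real" where
  "face_boundary w C e =
     (if e < length w then of_bool ((e, True) \<in> C) - of_bool ((e, False) \<in> C) else 0)"

definition knot_cycle :: "vpassage list \<Rightarrow> nat \<Rightarrow> real" where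
  "knot_cycle w e = of_bool (e < length w)"

definition loop_cycle :: "vpassage list \<Rightarrow> nat \<Rightarrow> nat \<Rightarrow> real" where
  "loop_cycle w p e = of_bool (p \<le> e \<and> e < partner w p)"

definition first_passages :: "vpassage list \<Rightarrow> nat set" where
  "first_passages w = {p. p < length w \<and> p < partner w p}"

lemma finite_first_passages: "finite (first_passages w)"
  unfolding first_passages_def by simp

lemma length_eq_2_card_first_passages:
  assumes wf: "vd_local_wf w"
  shows "length w = 2 * card (first_passages w)"
proof -
  let ?P = "first_passages w"
  have "{..<length w} = ?P \<union> partner w ` ?P"
  proof (intro equalityI subsetI)
    fix u
    assume u: "u \<in> {..<length w}"
    show "u \<in> ?P \<union> partner w ` ?P"
    proof (cases "u < partner w u")
      case True
      with u show ?thesis unfolding first_passages_def by auto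
    next
      case False
      with u have "partner w u \<in> ?P"
        using partner_neq[OF wf] partner_less_length[OF wf] partner_partner[OF wf]
        unfolding first_passages_def by (auto simp: nat_neq_iff)
      then show ?thesis
        using partner_partner[OF wf] u by (metis UnI2 image_eqI lessThan_iff)
    qed
  qed (use partner_less_length[OF wf] in \<open>auto simp: first_passages_def\<close>)
  moreover have "?P \<inter> partner w ` ?P = {}"
    using partner_less_length[OF wf] partner_partner[OF wf]
    unfolding first_passages_def by fastforce
  moreover have "inj_on (partner w) ?P"
    by (rule inj_on_inverseI[where g="partner w"]) (auto simp: first_passages_def partner_partner[OF wf])
  ultimately show ?thesis
    using finite_first_passages
    by (metis card_Un_disjoint card_image card_lessThan finite_imageI mult_2)
qed

lemma is_cycle_face_boundary:
  assumes wf: "vd_local_wf w" and C: "C \<in> faces w"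
  shows "is_cycle w (face_boundary w C)"
  unfolding is_cycle_def
proof (intro conjI allI impI)
  fix p
  assume p: "p < length w"
  let ?N = "length w"
  let ?q = "partner w p"
  have q: "?q < ?N" "partner w ?q = p" "lr w ?q = (\<not> lr w p)"
    using partner_less_length[OF wf p] partner_partner[OF wf p] lr_partner[OF wf p] by auto
  have N: "0 < ?N"
    using p by linarith
  show "face_boundary w C (pred_mod ?N p) + face_boundary w C (pred_mod ?N ?q)
           = face_boundary w C p + face_boundary w C ?q"
    using tail_pred_mem_face_iff[OF wf C p] tail_pred_mem_face_iff[OF wf C q(1)]
      head_mem_face_iff[OF wf C p] head_mem_face_iff[OF wf C q(1)] p q pred_mod_less[OF N]
    by (cases "lr w p") (simp_all add: face_boundary_def dart_in_eq)
qed (simp add: face_boundary_def)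

lemma is_cycle_loop_increment:
  assumes wf: "vd_local_wf w" and cy: "is_cycle w x" and e: "Suc e < length w"
  shows "(\<Sum>p\<in>first_passages w. (x p - x (pred_mod (length w) p)) * loop_cycle w p (Suc e))
       = (\<Sum>p\<in>first_passages w. (x p - x (pred_mod (length w) p)) * loop_cycle w p e)
         + (x (Suc e) - x e)"
proof -
  let ?N = "length w"
  let ?d = "\<lambda>p. x p - x (pred_mod ?N p)"
  let ?q = "partner w (Suc e)"
  have q: "?q < ?N" "?q \<noteq> Suc e" "partner w ?q = Suc e"
    using partner_less_length[OF wf e] partner_neq[OF wf e] partner_partner[OF wf e] by auto
  have jump: "?d p * loop_cycle w p (Suc e) - ?d p * loop_cycle w p e
      = (if p = Suc e then ?d p else 0) - (if p = ?q then ?d p else 0)"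
    if p: "p \<in> first_passages w" for p
  proof -
    have "p < ?N"
      using p unfolding first_passages_def by auto
    then have "partner w p = Suc e \<longleftrightarrow> p = ?q"
      using partner_partner[OF wf] e by metis
    then show ?thesis
      using p unfolding loop_cycle_def first_passages_def by auto
  qed
  have "(\<Sum>p\<in>first_passages w. ?d p * loop_cycle w p (Suc e))
      - (\<Sum>p\<in>first_passages w. ?d p * loop_cycle w p e)
      = (\<Sum>p\<in>first_passages w. (if p = Suc e then ?d p else 0) - (if p = ?q then ?d p else 0))"
    unfolding sum_subtractf[symmetric] by (rule sum.cong) (simp_all add: jump)
  also have "\<dots> = ?d (Suc e)"
  proof (cases "Suc e \<in> first_passages w")
    case True
    then have "?q \<notin> first_passages w"
      using q unfolding first_passages_def by auto
    with True show ?thesis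
      using finite_first_passages by (simp add: sum_subtractf)
  next
    case False
    then have "?q \<in> first_passages w"
      using q e unfolding first_passages_def by auto
    moreover have "x (pred_mod ?N (Suc e)) + x (pred_mod ?N ?q) = x (Suc e) + x ?q"
      using cy e unfolding is_cycle_def by blast
    ultimately show ?thesis
      using False finite_first_passages by (simp add: sum_subtractf)
  qed
  also have "\<dots> = x (Suc e) - x e"
    using e pred_mod_eq_diff[of "Suc e" ?N] by simp
  finally show ?thesis
    by simp
qed

text \<open>Telescoping along the knot: a cycle is determined by its value on the last edge
  and by its jumps at the first passages of the crossings.\<close>

lemma is_cycle_expansion:
  assumes wf: "vd_local_wf w" and cy: "is_cycle w x" and e: "e < length w"
  shows "x e = x (length w - 1)
    + (\<Sum>p\<in>first_passages w. (x p - x (pred_mod (length w) p)) * loop_cycle w p e)"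
  using e
proof (induction e)
  case 0
  let ?N = "length w"
  have N: "0 < ?N" using 0 by simp
  have "0 \<in> first_passages w"
    using partner_neq[OF wf N] N unfolding first_passages_def by auto
  moreover have "(x p - x (pred_mod ?N p)) * loop_cycle w p 0
      = (if p = 0 then x 0 - x (pred_mod ?N 0) else 0)" if "p \<in> first_passages w" for p
    using that by (auto simp: loop_cycle_def first_passages_def)
  ultimately show ?case
    using finite_first_passages pred_mod_0[OF N] by simp
next
  case (Suc e)
  then show ?case
    using is_cycle_loop_increment[OF wf cy Suc.prems] by simp
qed

lemma is_cycle_in_span_loops:
  assumes wf: "vd_local_wf w" and cy: "is_cycle w x"
  shows "x \<in> edge_fun.span (insert (knot_cycle w) (loop_cycle w ` first_passages w))"
proof -
  let ?N = "length w"
  let ?d = "\<lambda>p. x p - x (pred_mod ?N p)"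
  have "x = fscale (x (?N - 1)) (knot_cycle w) + (\<Sum>p\<in>first_passages w. fscale (?d p) (loop_cycle w p))"
  proof
    fix e
    show "x e = (fscale (x (?N - 1)) (knot_cycle w)
                 + (\<Sum>p\<in>first_passages w. fscale (?d p) (loop_cycle w p))) e"
    proof (cases "e < ?N")
      case True
      then show ?thesis
        using is_cycle_expansion[OF wf cy True] by (simp add: sum_fun_apply fscale_def knot_cycle_def)
    next
      case False
      have "loop_cycle w p e = 0" if "p \<in> first_passages w" for p
        using that False partner_less_length[OF wf, of p]
        unfolding loop_cycle_def first_passages_def by auto
      with False cy show ?thesis
        unfolding is_cycle_def by (simp add: sum_fun_apply fscale_def knot_cycle_def)
    qed
  qed
  also have "\<dots> \<in> edge_fun.span (insert (knot_cycle w) (loop_cycle w ` first_passages w))"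
    by (intro edge_fun.span_add edge_fun.span_scale edge_fun.span_sum edge_fun.span_base) auto
  finally show ?thesis .
qed

text \<open>The dual graph is connected, because the knot runs through every edge.\<close>

lemma const_on_darts_if_invariant:
  assumes wf: "vd_local_wf w"
    and face_inv: "\<And>d. d \<in> darts w \<Longrightarrow> h (face_perm w d) = h d"
    and edge_inv: "\<And>e. e < length w \<Longrightarrow> h (e, True) = h (e, False)"
    and d: "d \<in> darts w"
  shows "h d = h (0, True)"
proof -
  let ?N = "length w"
  have alpha_inv: "h (dart_alpha d) = h d" if "d \<in> darts w" for d
    using that edge_inv by (cases d; cases "snd d") (auto simp: dart_alpha_def darts_def)
  have sigma_inv: "h (dart_sigma w d) = h d" if "d \<in> darts w" for d
    using face_inv[OF dart_alpha_in_darts[OF that]] alpha_inv[OF that]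
    by (simp add: face_perm_def dart_alpha_def)
  have step: "h (Suc e mod ?N, True) = h (e, True)" if e: "e < ?N" for e
  proof -
    have "Suc e mod ?N < ?N"
      using e by (intro mod_less_divisor) linarith
    then have "(Suc e mod ?N, True) = dart_sigma w (dart_sigma w (e, False))"
      using dart_sigma_dart_sigma_in[OF wf] head_dart_eq[OF e] by simp
    moreover have "(e, False) \<in> darts w"
      using e by (simp add: darts_def)
    ultimately show ?thesis
      using sigma_inv dart_sigma_in_darts[OF wf] edge_inv[OF e] by simp
  qed
  have "h (e, True) = h (0, True)" if "e < ?N" for e
    using that
  proof (induction e)
    case (Suc e)
    then show ?case
      using step[of e] by simp
  qed simp
  with d show ?thesis
    using edge_inv by (cases d; cases "snd d") (auto simp: darts_def)
qed

lemma face_boundary_relation_const: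
  assumes wf: "vd_local_wf w"
    and rel: "\<And>e. e < length w \<Longrightarrow> (\<Sum>C\<in>faces w. c C * face_boundary w C e) = 0"
    and C: "C \<in> faces w" and C': "C' \<in> faces w"
  shows "c C = c C'"
proof -
  define h where "h d = c (face_rel w `` {d})" for d
  have mem_iff: "d \<in> C \<longleftrightarrow> C = face_rel w `` {d}" if "C \<in> faces w" "d \<in> darts w" for C d
  proof -
    obtain x where "x \<in> darts w" "C = face_rel w `` {x}"
      using \<open>C \<in> faces w\<close> unfolding faces_def by (blast elim: quotientE)
    then show ?thesis
      using that equiv_class_eq_iff[OF equiv_face_rel[OF wf], of x d] by auto
  qed
  have sum_mem: "(\<Sum>C\<in>faces w. c C * of_bool (d \<in> C)) = h d" if "d \<in> darts w" for d
  proof -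
    have "(\<Sum>C\<in>faces w. c C * of_bool (d \<in> C)) = (\<Sum>C\<in>faces w. if C = face_rel w `` {d} then c C else 0)"
      by (rule sum.cong) (auto simp: mem_iff that)
    also have "\<dots> = h d"
      using finite_faces quotientI[OF that] unfolding h_def faces_def by (simp add: sum.delta')
    finally show ?thesis .
  qed
  have edge_inv: "h (e, True) = h (e, False)" if "e < length w" for e
  proof -
    have "(\<Sum>C\<in>faces w. c C * face_boundary w C e)
        = (\<Sum>C\<in>faces w. c C * of_bool ((e, True) \<in> C)) - (\<Sum>C\<in>faces w. c C * of_bool ((e, False) \<in> C))"
      using that by (simp add: face_boundary_def right_diff_distrib sum_subtractf)
    then show ?thesis
      using rel[OF that] sum_mem that by (simp add: darts_def)
  qed
  have face_inv: "h (face_perm w d) = h d" if "d \<in> darts w" for d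
    using equiv_class_eq[OF equiv_face_rel[OF wf] face_rel_face_perm[OF wf that]] unfolding h_def by simp
  have "c D = h (0, True)" if D: "D \<in> faces w" for D
  proof -
    obtain d where "d \<in> darts w" "D = face_rel w `` {d}"
      using D unfolding faces_def by (blast elim: quotientE)
    then show ?thesis
      using const_on_darts_if_invariant[OF wf face_inv edge_inv] unfolding h_def by simp
  qed
  with C C' show ?thesis by simp
qed

lemma face_boundary_relation_trivial:
  assumes wf: "vd_local_wf w" and C0: "C0 \<in> faces w"
    and rel: "\<And>e. e < length w \<Longrightarrow> (\<Sum>C\<in>faces w - {C0}. c C * face_boundary w C e) = 0"
    and C: "C \<in> faces w - {C0}"
  shows "c C = 0"
proof -
  define c' where "c' C = (if C = C0 then 0 else c C)" for C
  have "(\<Sum>C\<in>faces w. c' C * face_boundary w C e) = (\<Sum>C\<in>faces w - {C0}. c C * face_boundary w C e)"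
    for e
  proof -
    have "(\<Sum>C\<in>faces w. c' C * face_boundary w C e) = (\<Sum>C\<in>faces w - {C0}. c' C * face_boundary w C e)"
      using sum.remove[OF finite_faces C0, of "\<lambda>C. c' C * face_boundary w C e"] by (simp add: c'_def)
    also have "\<dots> = (\<Sum>C\<in>faces w - {C0}. c C * face_boundary w C e)"
      by (rule sum.cong) (auto simp: c'_def)
    finally show ?thesis .
  qed
  then have "c' C = c' C0"
    using face_boundary_relation_const[OF wf _ _ C0, of c' C] rel C by simp
  with C show ?thesis
    by (simp add: c'_def)
qed

lemma inj_on_face_boundary:
  assumes wf: "vd_local_wf w" and C0: "C0 \<in> faces w"
  shows "inj_on (face_boundary w) (faces w - {C0})"
proof
  fix C1 C2
  assume C: "C1 \<in> faces w - {C0}" "C2 \<in> faces w - {C0}" and eq: "face_boundary w C1 = face_boundary w C2"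
  show "C1 = C2"
  proof (rule ccontr)
    assume ne: "C1 \<noteq> C2"
    define c :: "(nat \<times> bool) set \<Rightarrow> real" where "c C = of_bool (C = C1) - of_bool (C = C2)" for C
    have "(\<Sum>C\<in>faces w - {C0}. c C * face_boundary w C e) = face_boundary w C1 e - face_boundary w C2 e" for e
      using C finite_faces by (simp add: c_def left_diff_distrib sum_subtractf sum.delta')
    then have "c C1 = 0"
      using face_boundary_relation_trivial[OF wf C0 _ C(1), of c] eq by simp
    with ne show False
      by (simp add: c_def)
  qed
qed

lemma independent_face_boundaries:
  assumes wf: "vd_local_wf w" and C0: "C0 \<in> faces w"
  shows "edge_fun.independent (face_boundary w ` (faces w - {C0}))"
proof (rule edge_fun.independent_if_scalars_zero)
  show "finite (face_boundary w ` (faces w - {C0}))"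
    using finite_faces by simp
next
  fix f x
  assume rel: "(\<Sum>y\<in>face_boundary w ` (faces w - {C0}). fscale (f y) y) = 0"
    and x: "x \<in> face_boundary w ` (faces w - {C0})"
  have "(\<Sum>C\<in>faces w - {C0}. f (face_boundary w C) * face_boundary w C e) = 0" for e
    using fun_cong[OF rel, of e]
    by (simp add: sum.reindex[OF inj_on_face_boundary[OF wf C0]] sum_fun_apply fscale_def)
  with x show "f x = 0"
    using face_boundary_relation_trivial[OF wf C0, of "\<lambda>C. f (face_boundary w C)"] by auto
qed

lemma card_faces_eq:
  assumes "vd_wf w" and "w \<noteq> []"
  shows "card (faces w) = card (first_passages w) + 2"
  using assms length_eq_2_card_first_passages[of w]
  unfolding vd_wf_def num_faces_eq_card_faces by simp

text \<open>The dimension count: by Euler's formula there are N/2 + 2 faces, so the boundaries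
  of all faces but one form N/2 + 1 independent cycles inside the span of the N/2 + 1
  generators of the cycle space given by the knot and the loops.\<close>

lemma loop_cycle_in_span_face_boundaries:
  assumes wfd: "vd_wf w" and p: "p \<in> first_passages w" and C0: "C0 \<in> faces w"
  shows "loop_cycle w p \<in> edge_fun.span (face_boundary w ` (faces w - {C0}))"
proof (rule ccontr)
  let ?B = "face_boundary w ` (faces w - {C0})"
  let ?G = "insert (knot_cycle w) (loop_cycle w ` first_passages w)"
  have wf: "vd_local_wf w"
    using wfd by (rule vd_wf_imp_local_wf)
  have N: "w \<noteq> []"
    using p by (auto simp: first_passages_def)
  assume not_in_span: "loop_cycle w p \<notin> edge_fun.span ?B"
  then have new: "loop_cycle w p \<notin> ?B"
    using edge_fun.span_base[of "loop_cycle w p" ?B] by blast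
  have indep: "edge_fun.independent (insert (loop_cycle w p) ?B)"
    by (rule edge_fun.independent_insertI[OF not_in_span independent_face_boundaries[OF wf C0]])
  have "?B \<subseteq> edge_fun.span ?G"
    using is_cycle_in_span_loops[OF wf is_cycle_face_boundary[OF wf]] by blast
  moreover have "loop_cycle w p \<in> edge_fun.span ?G"
    using p by (intro edge_fun.span_base) simp
  ultimately have "insert (loop_cycle w p) ?B \<subseteq> edge_fun.span ?G"
    by blast
  moreover have "finite ?G"
    using finite_first_passages by simp
  ultimately have "card (insert (loop_cycle w p) ?B) \<le> card ?G"
    using edge_fun.independent_span_bound[OF _ indep] by blast
  moreover have "card (insert (loop_cycle w p) ?B) = card (faces w)"
  proof -
    have "card ?B = card (faces w) - 1"
      using card_image[OF inj_on_face_boundary[OF wf C0]] C0 finite_faces by simp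
    moreover have "card (faces w) > 0"
      using C0 finite_faces card_gt_0_iff by blast
    ultimately show ?thesis
      using new finite_faces by simp
  qed
  moreover have "card (faces w) = card (first_passages w) + 2"
    using card_faces_eq[OF wfd N] .
  moreover have "card ?G \<le> card (first_passages w) + 1"
  proof -
    have "card ?G \<le> Suc (card (loop_cycle w ` first_passages w))"
      using finite_first_passages by (simp add: card_insert_if)
    also have "\<dots> \<le> Suc (card (first_passages w))"
      using card_image_le[OF finite_first_passages] by simp
    finally show ?thesis by simp
  qed
  ultimately show False by simp
qed

definition intersection_number :: "vpassage list \<Rightarrow> (nat \<Rightarrow> real) \<Rightarrow> real" where
  "intersection_number w x =
     (\<Sum>v<length w. if lr w v then x (pred_mod (length w) v) else - x v)"

lemma intersection_number_add_scale:
  "intersection_number w (fscale a x + y) = a * intersection_number w x + intersection_number w y"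
proof -
  have "(if lr w v then (fscale a x + y) (pred_mod (length w) v) else - (fscale a x + y) v)
      = a * (if lr w v then x (pred_mod (length w) v) else - x v)
        + (if lr w v then y (pred_mod (length w) v) else - y v)" for v
    by (simp add: fscale_def)
  then show ?thesis
    unfolding intersection_number_def by (simp add: sum.distrib sum_distrib_left)
qed

text \<open>The face boundary contributions cancel in pairs: the term of passage v is the jump
  of the face at the partner of v.\<close>

lemma intersection_number_face_boundary:
  assumes wf: "vd_local_wf w" and C: "C \<in> faces w"
  shows "intersection_number w (face_boundary w C) = 0"
proof (cases "w = []")
  case True
  then show ?thesis by (simp add: intersection_number_def)
next
  case False
  let ?N = "length w"
  have N: "0 < ?N" using False by simp
  define M :: "nat \<times> bool \<Rightarrow> real" where "M d = of_bool (d \<in> C)" for d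
  define g where "g u = M (u, True) - M (pred_mod ?N u, True)" for u
  have summand: "(if lr w v then face_boundary w C (pred_mod ?N v) else - face_boundary w C v)
      = g (partner w v)" if v: "v < ?N" for v
  proof -
    let ?u = "partner w v"
    have u: "?u < ?N" "partner w ?u = v" "lr w ?u = (\<not> lr w v)"
      using partner_less_length[OF wf v] partner_partner[OF wf v] lr_partner[OF wf v] by auto
    have "face_boundary w C v = M (v, True) - M (v, False)"
        "face_boundary w C (pred_mod ?N v) = M (pred_mod ?N v, True) - M (pred_mod ?N v, False)"
      using v pred_mod_less[OF N] by (simp_all add: face_boundary_def M_def)
    then show ?thesis
      using tail_pred_mem_face_iff[OF wf C v] tail_pred_mem_face_iff[OF wf C u(1)]
        head_mem_face_iff[OF wf C v] u
      unfolding g_def M_def by (cases "lr w v") (simp_all add: dart_in_eq)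
  qed
  have "intersection_number w (face_boundary w C) = (\<Sum>v<?N. g (partner w v))"
    unfolding intersection_number_def by (rule sum.cong) (auto simp: summand)
  also have "\<dots> = (\<Sum>u<?N. g u)"
    using sum.reindex_bij_betw[OF bij_betw_partner[OF wf], of g] by simp
  also have "\<dots> = (\<Sum>u<?N. M (u, True)) - (\<Sum>u<?N. M (pred_mod ?N u, True))"
    unfolding g_def by (simp add: sum_subtractf)
  also have "(\<Sum>u<?N. M (pred_mod ?N u, True)) = (\<Sum>u<?N. M (u, True))"
    using sum.reindex_bij_betw[OF bij_betw_pred_mod[OF N], of "\<lambda>u. M (u, True)"] by simp
  finally show ?thesis by simp
qed

lemma intersection_number_span_face_boundaries:
  assumes wf: "vd_local_wf w" and x: "x \<in> edge_fun.span (face_boundary w ` S)" and S: "S \<subseteq> faces w"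
  shows "intersection_number w x = 0"
  using x
proof (induction rule: edge_fun.span_induct_alt)
  case base
  then show ?case by (simp add: intersection_number_def cong: if_cong)
next
  case (step c x y)
  then obtain C where "C \<in> faces w" "x = face_boundary w C"
    using S by blast
  then have "intersection_number w x = 0"
    using intersection_number_face_boundary[OF wf] by simp
  with step(2) have "intersection_number w (fscale c x + y) = 0"
    by (simp add: intersection_number_add_scale)
  then show ?case
    by (simp add: plus_fun_def)
qed

lemma intersection_number_loop_cycle:
  assumes wf: "vd_local_wf w" and p: "p < length w" and pq: "p < partner w p"
  shows "intersection_number w (loop_cycle w p) = (\<Sum>v\<in>{p<..<partner w p}. real_of_int (pm (lr w v)))"
proof -
  let ?N = "length w"
  let ?q = "partner w p"
  have N: "0 < ?N"
    using p by linarith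
  have q: "?q < ?N" "lr w ?q = (\<not> lr w p)"
    using partner_less_length[OF wf p] lr_partner[OF wf p] by auto
  have summand: "(if lr w v then loop_cycle w p (pred_mod ?N v) else - loop_cycle w p v) =
     (if p < v \<and> v < ?q then real_of_int (pm (lr w v)) else 0)
     + (if v = p then (if lr w p then 0 else -1) else 0)
     + (if v = ?q then (if lr w ?q then 1 else 0) else 0)" if v: "v < ?N" for v
  proof (cases "v = 0")
    case True
    then show ?thesis
      using pred_mod_0[OF N] q pq p unfolding loop_cycle_def pm_def by (cases "p = 0") auto
  next
    case False
    then have "pred_mod ?N v = v - 1"
      using pred_mod_eq_diff v by simp
    with False show ?thesis
      using q pq p unfolding loop_cycle_def pm_def by auto
  qed
  have "intersection_number w (loop_cycle w p)
      = (\<Sum>v<?N. (if p < v \<and> v < ?q then real_of_int (pm (lr w v)) else 0)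
          + (if v = p then (if lr w p then 0 else -1) else 0)
          + (if v = ?q then (if lr w ?q then 1 else 0) else 0))"
    unfolding intersection_number_def by (rule sum.cong) (simp_all add: summand)
  also have "\<dots> = (\<Sum>v<?N. if p < v \<and> v < ?q then real_of_int (pm (lr w v)) else 0)
      + (if lr w p then 0 else -1) + (if lr w ?q then 1 else 0)"
    using p q by (simp add: sum.distrib)
  also have "(\<Sum>v<?N. if p < v \<and> v < ?q then real_of_int (pm (lr w v)) else 0)
      = (\<Sum>v\<in>{p<..<?q}. real_of_int (pm (lr w v)))"
  proof -
    have "{p<..<?q} \<subseteq> {..<?N}"
      using q by auto
    then show ?thesis
      by (simp add: sum.If_cases Int_absorb1 flip: greaterThanLessThan_iff)
  qed
  finally show ?thesis
    using q by simp
qed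

text \<open>The Jordan curve theorem in the form needed: on a planar diagram, the loop from a
  passage to its partner is crossed equally often from left to right and from right
  to left.\<close>

theorem sum_pm_lr_loop_eq_0:
  assumes wfd: "vd_wf w" and p: "p < length w" and pq: "p < partner w p"
  shows "(\<Sum>v\<in>{p<..<partner w p}. pm (lr w v)) = 0"
proof -
  have wf: "vd_local_wf w"
    using wfd by (rule vd_wf_imp_local_wf)
  have C0: "face_rel w `` {(p, True)} \<in> faces w"
    unfolding faces_def by (rule quotientI) (simp add: darts_def p)
  have "p \<in> first_passages w"
    using p pq by (simp add: first_passages_def)
  then have "intersection_number w (loop_cycle w p) = 0"
    using intersection_number_span_face_boundaries[OF wf loop_cycle_in_span_face_boundaries[OF wfd _ C0]]
    by blast
  then have "real_of_int (\<Sum>v\<in>{p<..<partner w p}. pm (lr w v)) = 0"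
    using intersection_number_loop_cycle[OF wf p pq] by simp
  then show ?thesis
    by linarith
qed

section \<open>The index as a difference of accumulated shifts\<close>

lemma sum_lessThan_split:
  fixes f :: "nat \<Rightarrow> 'a::comm_monoid_add"
  assumes "m < n"
  shows "(\<Sum>u<n. f u) = (\<Sum>u<m. f u) + f m + (\<Sum>u\<in>{m<..<n}. f u)"
proof -
  have split: "{..<n} = {..<m} \<union> ({m} \<union> {m<..<n})"
    using assms by auto
  have "sum f ({..<m} \<union> ({m} \<union> {m<..<n})) = sum f {..<m} + sum f ({m} \<union> {m<..<n})"
    by (rule sum.union_disjoint) auto
  also have "sum f ({m} \<union> {m<..<n}) = f m + sum f {m<..<n}"
    by (subst sum.union_disjoint) auto
  finally show ?thesis
    unfolding split by (simp add: add.assoc)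
qed

definition index_term :: "vpassage list \<Rightarrow> nat \<Rightarrow> int" where
  "index_term w u = (if kind w u = Virt then 0 else pm (lr w u))"

lemma pm_lr_eq: "pm (lr w u) = index_term w u - vshift w u"
  unfolding index_term_def vshift_def pm_def by auto

lemma sum_index_term_eq_0: "vd_local_wf w \<Longrightarrow> (\<Sum>u<length w. index_term w u) = 0"
  using sum_pm_lr_eq_0[of w] lap_shift_eq_0[of w]
  by (simp add: pm_lr_eq sum_subtractf lap_shift_def pre_shift_def)

lemma sum_index_term_loop:
  assumes "vd_wf w" "p < length w" "p < partner w p"
  shows "(\<Sum>u\<in>{p<..<partner w p}. index_term w u) = (\<Sum>u\<in>{p<..<partner w p}. vshift w u)"
  using sum_pm_lr_loop_eq_0[OF assms] by (simp add: pm_lr_eq sum_subtractf)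

lemma vd_index_eq_sum_index_term:
  assumes "kind w t = Over"
  shows "vd_index w t =
    (\<Sum>u\<in>{u. u < length w \<and> on_path (length w) t (partner w t) u}. index_term w u)"
proof -
  have "vd_index w t = (\<Sum>u\<in>{u. u < length w \<and> on_path (length w) t (partner w t) u
                                 \<and> kind w u \<noteq> Virt}. pm (lr w u))"
    unfolding vd_index_def using assms by simp
  also have "\<dots> = (\<Sum>u\<in>{u. u < length w \<and> on_path (length w) t (partner w t) u}. index_term w u)"
    by (rule sum.mono_neutral_cong_left) (auto simp: index_term_def)
  finally show ?thesis .
qed

text \<open>The specified path of a crossing is either the loop from its over-passage a to its
  under-passage b, or the complement of the loop from b to a; on both, real and virtual
  crossings contribute opposite amounts by the Jordan curve property above.\<close>

lemma vd_index_eq_pre_shift_diff: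
  assumes wfd: "vd_wf w" and t: "t < length w" and ov: "kind w t = Over"
  shows "vd_index w t = pre_shift w (partner w t) - pre_shift w t"
proof -
  have wf: "vd_local_wf w"
    using wfd by (rule vd_wf_imp_local_wf)
  let ?N = "length w"
  let ?b = "partner w t"
  have b: "?b < ?N" "?b \<noteq> t" "partner w ?b = t" "kind w ?b = Under"
    using partner_less_length[OF wf t] partner_neq[OF wf t] partner_partner[OF wf t]
      kind_partner_Under_iff[OF wf t] ov by auto
  have shift0: "vshift w t = 0" "vshift w ?b = 0"
    using ov b(4) by (auto simp: vshift_def)
  show ?thesis
  proof (cases "t < ?b")
    case True
    then have "{u. u < ?N \<and> on_path ?N t ?b u} = {t<..<?b}"
      using b(1) by (auto simp: on_path_def)
    moreover have "pre_shift w ?b = pre_shift w t + vshift w t + (\<Sum>u\<in>{t<..<?b}. vshift w u)"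
      unfolding pre_shift_def by (rule sum_lessThan_split[OF True])
    ultimately show ?thesis
      using vd_index_eq_sum_index_term[OF ov] sum_index_term_loop[OF wfd t True] shift0 by simp
  next
    case False
    then have bt: "?b < t"
      using b(2) by simp
    have "{u. u < ?N \<and> on_path ?N t ?b u} = {..<?b} \<union> {t<..<?N}"
      using bt t by (auto simp: on_path_def)
    moreover have "sum (index_term w) ({..<?b} \<union> {t<..<?N})
        = sum (index_term w) {..<?b} + sum (index_term w) {t<..<?N}"
      by (rule sum.union_disjoint) (use bt in auto)
    ultimately have "vd_index w t = (\<Sum>u<?b. index_term w u) + (\<Sum>u\<in>{t<..<?N}. index_term w u)"
      using vd_index_eq_sum_index_term[OF ov] by simp
    moreover have "index_term w t + index_term w ?b = 0"
      using ov b(4) lr_partner[OF wf t] by (auto simp: index_term_def pm_def)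
    moreover have "(\<Sum>u\<in>{?b<..<t}. index_term w u) = (\<Sum>u\<in>{?b<..<t}. vshift w u)"
      using sum_index_term_loop[OF wfd b(1)] b(3) bt by simp
    moreover have "pre_shift w t = pre_shift w ?b + vshift w ?b + (\<Sum>u\<in>{?b<..<t}. vshift w u)"
      unfolding pre_shift_def by (rule sum_lessThan_split[OF bt])
    ultimately show ?thesis
      using sum_index_term_eq_0[OF wf] sum_lessThan_split[OF t, of "index_term w"]
        sum_lessThan_split[OF bt, of "index_term w"] shift0 by simp
  qed
qed

lemma vd_index_partner:
  assumes wf: "vd_local_wf w" and t: "t < length w" and real: "kind w t \<noteq> Virt"
  shows "vd_index w (partner w t) = vd_index w t"
  using kind_partner_Under_iff[OF wf t] kind_partner_Over_iff[OF wf t] real partner_partner[OF wf t]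
  by (cases "kind w t") (auto simp: vd_index_def Let_def)

lemma dvd_pre_shift_diff_iff_dvd_vd_index:
  assumes wfd: "vd_wf w" and t: "t < length w" and real: "kind w t \<noteq> Virt"
  shows "k dvd (pre_shift w (partner w t) - pre_shift w t) \<longleftrightarrow> k dvd vd_index w t"
proof -
  have wf: "vd_local_wf w"
    using wfd by (rule vd_wf_imp_local_wf)
  show ?thesis
  proof (cases "kind w t")
    case Over
    then show ?thesis
      using vd_index_eq_pre_shift_diff[OF wfd t] by simp
  next
    case Under
    have "partner w t < length w" "kind w (partner w t) = Over"
      using partner_less_length[OF wf t] kind_partner_Over_iff[OF wf t] Under by auto
    then have "pre_shift w (partner w t) - pre_shift w t = - vd_index w t"
      using vd_index_eq_pre_shift_diff[OF wfd] vd_index_partner[OF wf t real] partner_partner[OF wf t]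
      by simp
    then show ?thesis
      by (simp only: dvd_minus_iff)
  next
    case Virt
    with real show ?thesis by simp
  qed
qed

definition gd_rename :: "('a \<Rightarrow> 'b) \<Rightarrow> 'a gletter list \<Rightarrow> 'b gletter list" where
  "gd_rename f w = map (\<lambda>(c, ov, s). (f c, ov, s)) w"

lemma gd_rename_gd_rename: "gd_rename f (gd_rename g w) = gd_rename (f \<circ> g) w"
  unfolding gd_rename_def by auto

lemma gd_rename_cong: "(\<And>c. c \<in> fst ` set w \<Longrightarrow> f c = g c) \<Longrightarrow> gd_rename f w = gd_rename g w"
  unfolding gd_rename_def by (auto intro!: map_cong) (metis fst_conv image_eqI)

lemma gd_wf_gd_rename:
  assumes inj: "inj_on f (fst ` set w)" and wf: "gd_wf w"
  shows "gd_wf (gd_rename f w)"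
  unfolding gd_wf_def
proof
  fix c'
  assume "c' \<in> fst ` set (gd_rename f w)"
  then obtain c where c: "c \<in> fst ` set w" "c' = f c"
    unfolding gd_rename_def by force
  obtain s where s: "s = 1 \<or> s = -1" "length (filter (\<lambda>x. fst x = c) w) = 2"
      "(c, True, s) \<in> set w" "(c, False, s) \<in> set w"
    using wf c(1) unfolding gd_wf_def by blast
  have eq_iff: "f a = f c \<longleftrightarrow> a = c" if "(a, ov, b) \<in> set w" for a ov b
    using inj_onD[OF inj _ _ c(1), of a] that by force
  have "length (filter (\<lambda>x. fst x = c') (gd_rename f w)) = length (filter (\<lambda>x. fst x = c) w)"
    unfolding gd_rename_def c(2) filter_map length_map
    by (intro arg_cong[where f=length] filter_cong) (auto simp: eq_iff)
  then show "\<exists>s. (s = 1 \<or> s = -1) \<and> length (filter (\<lambda>x. fst x = c') (gd_rename f w)) = 2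
      \<and> (c', True, s) \<in> set (gd_rename f w) \<and> (c', False, s) \<in> set (gd_rename f w)"
    using s c(2) unfolding gd_rename_def by (intro exI[of _ s]) force
qed

lemma gd_step_gd_rename: "gd_wf w \<Longrightarrow> inj f \<Longrightarrow> gd_step w (gd_rename f w)"
  unfolding gd_rename_def by (rule gd_step.rename)

text \<open>The rename move needs a globally injective map; an injection on the crossings is
  extended by sending the crossings to even and all other labels to odd numbers.\<close>

lemma gd_steps_gd_rename:
  fixes w :: "nat gletter list"
  assumes wf: "gd_wf w" and inj: "inj_on f (fst ` set w)"
  shows "(\<lambda>x y. gd_step x y \<or> gd_step y x)\<^sup>*\<^sup>* (gd_rename f w) w"
proof -
  define g where "g n = (if n \<in> fst ` set w then 2 * f n else Suc (2 * n))" for n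
  have "inj g"
  proof (rule injI)
    fix m n
    assume eq: "g m = g n"
    have "even (g k) \<longleftrightarrow> k \<in> fst ` set w" for k
      by (simp add: g_def)
    then have "m \<in> fst ` set w \<longleftrightarrow> n \<in> fst ` set w"
      using eq by metis
    with eq show "m = n"
      using inj_onD[OF inj] by (auto simp: g_def split: if_splits)
  qed
  have "gd_rename g w = gd_rename (\<lambda>n. 2 * n) (gd_rename f w)"
    unfolding gd_rename_gd_rename by (rule gd_rename_cong) (simp add: g_def)
  moreover have "inj (\<lambda>n::nat. 2 * n)"
    by (rule injI) simp
  ultimately have "gd_step (gd_rename f w) (gd_rename g w)"
    using gd_step_gd_rename[OF gd_wf_gd_rename[OF inj wf]] by simp
  moreover have "gd_step w (gd_rename g w)"
    using gd_step_gd_rename[OF wf \<open>inj g\<close>] .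
  ultimately show ?thesis
    using r_into_rtranclp[of "\<lambda>x y. gd_step x y \<or> gd_step y x" "gd_rename g w" w]
    by (auto intro: converse_rtranclp_into_rtranclp)
qed

lemma gd_equiv_gd_rename:
  fixes w :: "'a::countable gletter list" and f :: "'a \<Rightarrow> 'b::countable"
  assumes wf: "gd_wf w" and inj: "inj f"
  shows "gd_equiv (gd_rename f w) w"
proof -
  let ?h = "\<lambda>n. to_nat (f (from_nat n))"
  have relabel: "gd_relabel v = gd_rename to_nat v" for v :: "'c::countable gletter list"
    unfolding gd_relabel_def gd_rename_def ..
  have "gd_wf (gd_relabel w)"
    unfolding relabel by (rule gd_wf_gd_rename[OF inj_on_subset[OF inj_to_nat] wf]) simp
  moreover have "inj_on ?h (fst ` set (gd_relabel w))"
    using inj unfolding relabel gd_rename_def by (auto intro!: inj_onI dest: injD)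
  moreover have "gd_relabel (gd_rename f w) = gd_rename ?h (gd_relabel w)"
    unfolding relabel gd_rename_gd_rename by (simp add: comp_def)
  ultimately show ?thesis
    unfolding gd_equiv_def by (simp only: gd_steps_gd_rename)
qed

lemma concat_map_if_singleton:
  "concat (map (\<lambda>t. if P t then [g t] else []) xs) = map g (filter P xs)"
  by (induction xs) auto

lemma concat_map_if_Nil:
  "concat (map (\<lambda>t. if P t then [] else [g t]) xs) = map g (filter (\<lambda>t. \<not> P t) xs)"
  by (induction xs) auto

lemma length_filter_upt: "length (filter P [0..<n]) = card {t. t < n \<and> P t}"
  unfolding length_filter_conv_card by (intro arg_cong[where f=card]) auto

lemma nlaps_eq_1: "lap_shift w = 0 \<Longrightarrow> nlaps w r = 1"
  unfolding nlaps_def by (rule Least_equality) auto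

lemma psign_partner:
  assumes wf: "vd_local_wf w" and t: "t < length w" and real: "kind w t \<noteq> Virt"
  shows "psign w (partner w t) = psign w t"
  using lr_partner[OF wf t] kind_partner_Under_iff[OF wf t] kind_partner_Over_iff[OF wf t] real
  by (cases "kind w t") (auto simp: psign_def)

definition covering_keeps :: "vpassage list \<Rightarrow> nat \<Rightarrow> nat \<Rightarrow> bool" where
  "covering_keeps w r t \<longleftrightarrow> kind w t \<noteq> Virt \<and> int r dvd vd_index w t"

lemma covering_eq:
  "covering w r = map (\<lambda>t. (fst (w ! t), kind w t = Over, psign w t))
     (filter (covering_keeps w r) [0..<length w])"
  unfolding covering_def covering_keeps_def by (simp add: concat_map_if_singleton)

lemma covering_keeps_partner:
  assumes wf: "vd_local_wf w" and t: "t < length w"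
  shows "covering_keeps w r (partner w t) \<longleftrightarrow> covering_keeps w r t"
  using kind_partner_Virt_iff[OF wf t] vd_index_partner[OF wf t]
  unfolding covering_keeps_def by auto

lemma length_filter_covering:
  assumes wf: "vd_local_wf w" and t: "t < length w" and keep: "covering_keeps w r t"
  shows "length (filter (\<lambda>x. fst x = fst (w ! t)) (covering w r)) = 2"
proof -
  have "{s. s < length w \<and> covering_keeps w r s \<and> fst (w ! s) = fst (w ! t)} = {t, partner w t}"
  proof -
    have "s = t \<or> s = partner w t" if "s < length w" "fst (w ! s) = fst (w ! t)" for s
      using partner_eqI[OF wf t that(1)] that(2) by auto
    then show ?thesis
      using t keep partner_less_length[OF wf t] covering_keeps_partner[OF wf t]
        fst_nth_partner[OF wf t] by auto
  qed
  then show ?thesis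
    using partner_neq[OF wf t] unfolding covering_eq
    by (simp add: filter_map o_def length_filter_upt)
qed

lemma gd_wf_covering:
  assumes wf: "vd_local_wf w"
  shows "gd_wf (covering w r)"
  unfolding gd_wf_def
proof
  fix c
  assume "c \<in> fst ` set (covering w r)"
  then obtain t where t: "t < length w" "covering_keeps w r t" "c = fst (w ! t)"
    unfolding covering_eq by auto
  let ?u = "partner w t"
  have u: "?u < length w" "covering_keeps w r ?u" "fst (w ! ?u) = c" "psign w ?u = psign w t"
    using partner_less_length[OF wf t(1)] covering_keeps_partner[OF wf t(1)] fst_nth_partner[OF wf t(1)]
      psign_partner[OF wf t(1)] t unfolding covering_keeps_def by auto
  have mem: "(fst (w ! s), kind w s = Over, psign w s) \<in> set (covering w r)"
    if "s < length w" "covering_keeps w r s" for s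
    unfolding covering_eq using that by auto
  have "kind w t = Over \<longleftrightarrow> kind w ?u \<noteq> Over"
    using kind_partner_Under_iff[OF wf t(1)] kind_partner_Over_iff[OF wf t(1)] t(2)
    unfolding covering_keeps_def by (cases "kind w t") auto
  then have "(c, True, psign w t) \<in> set (covering w r) \<and> (c, False, psign w t) \<in> set (covering w r)"
    using mem[OF t(1,2)] mem[OF u(1,2)] t(3) u(3,4) by (cases "kind w t = Over") auto
  with length_filter_covering[OF wf t(1,2)] t(3)
  show "\<exists>s. (s = 1 \<or> s = -1) \<and> length (filter (\<lambda>x. fst x = c) (covering w r)) = 2 \<and>
      (c, True, s) \<in> set (covering w r) \<and> (c, False, s) \<in> set (covering w r)"
    by (intro exI[of _ "psign w t"]) (auto simp: psign_def)
qed

text \<open>The strand of the component through position i at the base point occupies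
  position i + pre_shift w t (mod r) at passage t: since the lap shift vanishes, the
  component closes up after one lap.\<close>

definition mplex_label :: "vpassage list \<Rightarrow> nat \<Rightarrow> nat \<Rightarrow> nat \<Rightarrow> nat \<times> int" where
  "mplex_label w r i t = (fst (w ! t), (int i + pre_shift w t) mod int r)"

lemma mplex_component_eq:
  assumes wf: "vd_local_wf w"
  shows "mplex_component w r i = map (\<lambda>t. (mplex_label w r i t, kind w t = Over, psign w t))
            (filter (\<lambda>t. kind w t \<noteq> Virt) [0..<length w])"
proof -
  have "mplex_component w r i = concat (map (\<lambda>t. if kind w t = Virt then []
       else [(mplex_label w r i t, kind w t = Over, psign w t)]) [0..<length w])"
    unfolding mplex_component_def nlaps_eq_1[OF lap_shift_eq_0[OF wf]] lap_shift_eq_0[OF wf]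
      mplex_label_def
    by (simp cong: if_cong)
  then show ?thesis
    by (simp only: concat_map_if_Nil)
qed

lemma mplex_label_partner_eq_iff:
  assumes wfd: "vd_wf w" and t: "t < length w" and real: "kind w t \<noteq> Virt"
  shows "mplex_label w r i (partner w t) = mplex_label w r i t \<longleftrightarrow> int r dvd vd_index w t"
proof -
  from fst_nth_partner[OF vd_wf_imp_local_wf[OF wfd] t] show ?thesis
    using dvd_pre_shift_diff_iff_dvd_vd_index[OF wfd t real, of "int r"]
    unfolding mplex_label_def by (simp add: mod_eq_dvd_iff)
qed

lemma length_filter_mplex_label:
  assumes wf: "vd_local_wf w" and t: "t < length w" and real: "kind w t \<noteq> Virt"
  shows "length (filter (\<lambda>y. fst y = mplex_label w r i t) (mplex_component w r i)) =
         (if mplex_label w r i (partner w t) = mplex_label w r i t then 2 else 1)"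
proof -
  let ?N = "length w"
  have "{s. s < ?N \<and> kind w s \<noteq> Virt \<and> mplex_label w r i s = mplex_label w r i t} =
     (if mplex_label w r i (partner w t) = mplex_label w r i t then {t, partner w t} else {t})"
  proof -
    have "s = t \<or> s = partner w t" if "s < ?N" "mplex_label w r i s = mplex_label w r i t" for s
      using partner_eqI[OF wf t that(1)] that(2) unfolding mplex_label_def by auto
    then show ?thesis
      using t real partner_less_length[OF wf t] kind_partner_Virt_iff[OF wf t] by auto
  qed
  then show ?thesis
    unfolding mplex_component_eq[OF wf] using partner_neq[OF wf t]
    by (simp add: filter_map o_def length_filter_upt)
qed

lemma mplex_knot_eq:
  assumes wfd: "vd_wf w"
  shows "mplex_knot w r i = map (\<lambda>t. (mplex_label w r i t, kind w t = Over, psign w t))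
            (filter (covering_keeps w r) [0..<length w])"
proof -
  have wf: "vd_local_wf w"
    using wfd by (rule vd_wf_imp_local_wf)
  have "mplex_knot w r i = map (\<lambda>t. (mplex_label w r i t, kind w t = Over, psign w t))
      (filter (\<lambda>t. kind w t \<noteq> Virt
          \<and> length (filter (\<lambda>y. fst y = mplex_label w r i t) (mplex_component w r i)) = 2)
        [0..<length w])"
    unfolding mplex_knot_def Let_def
    by (subst (1) mplex_component_eq[OF wf]) (simp add: filter_map o_def)
  also have "\<dots> = map (\<lambda>t. (mplex_label w r i t, kind w t = Over, psign w t))
      (filter (covering_keeps w r) [0..<length w])"
    using length_filter_mplex_label[OF wf] mplex_label_partner_eq_iff[OF wfd]
    unfolding covering_keeps_def by (intro arg_cong[where f="map _"] filter_cong) (auto split: if_splits)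
  finally show ?thesis .
qed

definition mplex_position :: "vpassage list \<Rightarrow> nat \<Rightarrow> nat \<Rightarrow> nat \<Rightarrow> int" where
  "mplex_position w r i c =
     snd (mplex_label w r i (SOME t. t < length w \<and> kind w t \<noteq> Virt \<and> fst (w ! t) = c))"

lemma mplex_label_eq_position:
  assumes wfd: "vd_wf w" and t: "t < length w" "covering_keeps w r t"
  shows "mplex_label w r i t = (fst (w ! t), mplex_position w r i (fst (w ! t)))"
proof -
  have wf: "vd_local_wf w"
    using wfd by (rule vd_wf_imp_local_wf)
  have real: "kind w t \<noteq> Virt" and dvd: "int r dvd vd_index w t"
    using t(2) unfolding covering_keeps_def by auto
  let ?P = "\<lambda>s. s < length w \<and> kind w s \<noteq> Virt \<and> fst (w ! s) = fst (w ! t)"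
  have "?P (SOME s. ?P s)"
    by (rule someI[of ?P t]) (use t(1) real in auto)
  then have "(SOME s. ?P s) = t \<or> (SOME s. ?P s) = partner w t"
    using partner_eqI[OF wf t(1)] by blast
  moreover have "mplex_label w r i (partner w t) = mplex_label w r i t"
    using mplex_label_partner_eq_iff[OF wfd t(1) real] dvd by simp
  ultimately have "mplex_label w r i (SOME s. ?P s) = mplex_label w r i t"
    by auto
  then show ?thesis
    unfolding mplex_position_def by (simp add: mplex_label_def)
qed

lemma mplex_knot_eq_gd_rename_covering:
  assumes "vd_wf w"
  shows "mplex_knot w r i = gd_rename (\<lambda>c. (c, mplex_position w r i c)) (covering w r)"
  unfolding mplex_knot_eq[OF assms] covering_eq gd_rename_def
  by (auto simp: mplex_label_eq_position[OF assms])

theorem theorem1p4: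
  fixes D :: "vpassage list" and r i :: nat
  assumes "vd_wf D" and "r \<ge> 2" and "1 \<le> i" and "i \<le> r"
  shows "gd_equiv (mplex_knot D r i) (covering D r)"
proof -
  have "inj (\<lambda>c. (c, mplex_position D r i c))"
    by (rule injI) simp
  with gd_wf_covering[OF vd_wf_imp_local_wf[OF \<open>vd_wf D\<close>]] show ?thesis
    unfolding mplex_knot_eq_gd_rename_covering[OF \<open>vd_wf D\<close>] by (rule gd_equiv_gd_rename)
qed

end
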